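(* Let $N\ge 2$, $\lambda\ne0$, and for $x,p\in\mathbb{C}^N$ set $$L_k(x,p;\lambda)=\begin{pmatrix}\lambda(e^{2p_k}+1)+x_k(e^{2p_k}-1) & (\lambda^2-x_k^2)(e^{2p_k}-1)\\ e^{2p_k}-1 & \lambda(e^{2p_k}+1)-x_k(e^{2p_k}-1)\end{pmatrix},\qquad T_N(x,p;\lambda)=L_N(x,p;\lambda)\cdots L_1(x,p;\lambda).$$ (a) Periodic case: if $\widetilde{x}\in\mathbb{C}^N$ satisfies $e^{2p_k}=\frac{\widetilde{x}_k-x_k+\lambda}{\widetilde{x}_k-x_k-\lambda}\cdot\frac{x_k-\widetilde{x}_{k-1}+\lambda}{x_k-\widetilde{x}_{k-1}-\lambda}$ for $k=1,\dots,N$ with $\widetilde x_0=\widetilde x_N$, $x_{N+1}=x_1$, then $$(2\lambda)^N\frac{\prod_{k=1}^N(\widetilde{x}_k-x_{k+1}-\lambda)}{\prod_{k=1}^N(\widetilde{x}_k-x_k-\lambda)}$$ is an eigenvalue of $T_N(x,p;\lambda)$. (b) Open-end case: if $e^{2p_1}=\frac{\widetilde{x}_1-x_1+\lambda}{\widetilde{x}_1-x_1-\lambda}$ and the relation in (a) holds for $k=2,\dots,N$, then the $(2,1)$-entry of $T_N(x,p;\lambda)$ equals $$(2\lambda)^N\frac{\prod_{k=1}^{N-1}(\widetilde{x}_k-x_{k+1}-\lambda)}{\prod_{k=1}^N(\widetilde{x}_k-x_k-\lambda)}.$$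
   Context: The relation between $(x,p)$ and $\widetilde x$ is the first half of the Bäcklund transformation $F_\lambda$ of the symmetric rational multiplicative Toda-type system $\ddot x_k=-(\dot x_k^2-1)\big(\frac{1}{x_{k+1}-x_k}-\frac{1}{x_k-x_{k-1}}\big)$. *)

theory Defs
  imports "HOL-Analysis.Analysis"
begin

text \<open>Lax matrix L_k(x,p;lambda); vectors x, p are functions indexed by 1..N.
  Row/column index 1 :: 2 is the first, 2 :: 2 the second.\<close>
definition Lmat :: "(nat \<Rightarrow> complex) \<Rightarrow> (nat \<Rightarrow> complex) \<Rightarrow> complex \<Rightarrow> nat \<Rightarrow> complex^2^2" where
  "Lmat x p lam k = (let E = exp (2 * p k) in
     (\<chi> i j. if i = 1 then (if j = 1 then lam * (E + 1) + x k * (E - 1)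
                                   else (lam^2 - (x k)^2) * (E - 1))
             else (if j = 1 then E - 1 else lam * (E + 1) - x k * (E - 1))))"

fun Tmat :: "(nat \<Rightarrow> complex) \<Rightarrow> (nat \<Rightarrow> complex) \<Rightarrow> complex \<Rightarrow> nat \<Rightarrow> complex^2^2" where
  "Tmat x p lam 0 = mat 1"
| "Tmat x p lam (Suc n) = Lmat x p lam (Suc n) ** Tmat x p lam n"

definition is_eigenvalue :: "complex^2^2 \<Rightarrow> complex \<Rightarrow> bool" where
  "is_eigenvalue A mu \<longleftrightarrow> (\<exists>v. v \<noteq> 0 \<and> A *v v = mu *s v)"

end

theory Submission
  imports Defs
begin

text \<open>
  On homogeneous coordinates (t, 1) the Lax matrix L_k acts as a Moebius transformation, and
  the relation defining exp(2 p_k) says exactly that L_k maps (xt_{k-1}, 1) to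
  2 lam (xt_{k-1} - x_k - lam) / (xt_k - x_k - lam) times (xt_k, 1).  Chaining these steps,
  T_N maps (xt_0, 1) to the product of the factors times (xt_N, 1).  In the periodic case
  xt_0 = xt_N, so (xt_N, 1) is an eigenvector.  In the open-end case L_1 maps the first unit
  vector to a multiple of (xt_1, 1), and the (2,1)-entry of T_N is the second coordinate of
  the image of the first unit vector.
\<close>

definition hvec :: "complex \<Rightarrow> complex^2" where
  "hvec t = (\<chi> i. if i = 1 then t else 1)"

lemma hvec_nonzero: "hvec t \<noteq> 0"
proof
  assume "hvec t = 0"
  then have "hvec t $ 2 = 0" by simp
  then show False by (simp add: hvec_def)
qed

lemma Lmat_mult_hvec:
  assumes t: "t - x k - lam \<noteq> 0" and y: "x k - y - lam \<noteq> 0"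
    and E: "exp (2 * p k) = (t - x k + lam) / (t - x k - lam) * ((x k - y + lam) / (x k - y - lam))"
  shows "Lmat x p lam k *v hvec y = (2 * lam * (y - x k - lam) / (t - x k - lam)) *s hvec t"
proof -
  define c where "c = 2 * lam * (y - x k - lam) / (t - x k - lam)"
  have hc: "c * (t - x k - lam) = 2 * lam * (y - x k - lam)"
    using t by (simp add: c_def)
  have hE: "exp (2 * p k) * ((t - x k - lam) * (x k - y - lam)) = (t - x k + lam) * (x k - y + lam)"
    using t y by (simp add: E)
  have "(lam * (exp (2 * p k) + 1) + x k * (exp (2 * p k) - 1)) * y
          + (lam^2 - (x k)^2) * (exp (2 * p k) - 1) = c * t"
       "(exp (2 * p k) - 1) * y + (lam * (exp (2 * p k) + 1) - x k * (exp (2 * p k) - 1)) = c"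
    using t y hE hc by algebra+
  then show ?thesis
    by (simp add: vec_eq_iff forall_2 matrix_vector_mult_def sum_2 Lmat_def Let_def hvec_def
        flip: c_def)
qed

lemma Lmat_mult_axis1:
  assumes t: "t - x k - lam \<noteq> 0"
    and E: "exp (2 * p k) = (t - x k + lam) / (t - x k - lam)"
  shows "Lmat x p lam k *v axis 1 1 = (2 * lam / (t - x k - lam)) *s hvec t"
proof -
  define c where "c = 2 * lam / (t - x k - lam)"
  have hc: "c * (t - x k - lam) = 2 * lam"
    using t by (simp add: c_def)
  have hE: "exp (2 * p k) * (t - x k - lam) = t - x k + lam"
    using t by (simp add: E)
  have "lam * (exp (2 * p k) + 1) + x k * (exp (2 * p k) - 1) = c * t" "exp (2 * p k) - 1 = c"
    using t hE hc by algebra+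
  then show ?thesis
    by (simp add: vec_eq_iff forall_2 matrix_vector_mult_def sum_2 Lmat_def Let_def hvec_def axis_def
        flip: c_def)
qed

lemma Tmat_mult_chain:
  assumes "\<And>k. k \<in> {1..n} \<Longrightarrow> Lmat x p lam k *v v (k - 1) = c k *s v k"
  shows "Tmat x p lam n *v v 0 = (\<Prod>k=1..n. c k) *s v n"
  using assms
proof (induction n)
  case (Suc n)
  have "Tmat x p lam (Suc n) *v v 0 = Lmat x p lam (Suc n) *v ((\<Prod>k=1..n. c k) *s v n)"
    using Suc by (simp add: matrix_vector_mul_assoc[symmetric])
  also have "\<dots> = (\<Prod>k=1..n. c k) *s (c (Suc n) *s v (Suc n))"
    using Suc.prems[of "Suc n"] by (simp add: vector_scalar_commute)
  finally show ?case
    by (simp add: prod.nat_ivl_Suc' mult.commute)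
qed simp

lemma Tmat_periodic_eigenvalue:
  assumes "N \<ge> 1"
    and H: "\<forall>k\<in>{1..N}. xt k - x k - lam \<noteq> 0 \<and>
        x k - (if k = 1 then xt N else xt (k - 1)) - lam \<noteq> 0 \<and>
        exp (2 * p k) =
          (xt k - x k + lam) / (xt k - x k - lam) *
          ((x k - (if k = 1 then xt N else xt (k - 1)) + lam) /
           (x k - (if k = 1 then xt N else xt (k - 1)) - lam))"
  shows "is_eigenvalue (Tmat x p lam N)
           ((2 * lam) ^ N *
            (\<Prod>k=1..N. xt k - (if k = N then x 1 else x (k + 1)) - lam) /
            (\<Prod>k=1..N. xt k - x k - lam))"
proof -
  obtain M where N: "N = Suc M"
    using assms(1) by (cases N) auto
  define y where "y k = (if k = 0 then xt N else xt k)" for k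
  have chain: "Tmat x p lam N *v hvec (y 0) =
     (\<Prod>k=1..N. 2 * lam * (y (k - 1) - x k - lam) / (xt k - x k - lam)) *s hvec (y N)"
  proof (rule Tmat_mult_chain)
    fix k assume k: "k \<in> {1..N}"
    have "y (k - 1) = (if k = 1 then xt N else xt (k - 1))"
      using k by (simp add: y_def)
    then show "Lmat x p lam k *v hvec (y (k - 1)) =
        (2 * lam * (y (k - 1) - x k - lam) / (xt k - x k - lam)) *s hvec (y k)"
      using H k Lmat_mult_hvec[of "xt k" x k lam "y (k - 1)" p] by (simp add: y_def)
  qed
  have numerator: "(\<Prod>k=1..N. y (k - 1) - x k - lam) =
      (\<Prod>k=1..N. xt k - (if k = N then x 1 else x (k + 1)) - lam)"
  proof -
    have "(\<Prod>k=1..N. y (k - 1) - x k - lam) = (\<Prod>k<Suc M. y k - x (Suc k) - lam)"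
      by (simp add: N prod.atLeast1_atMost_eq)
    also have "\<dots> = (xt N - x 1 - lam) * (\<Prod>k<M. xt (Suc k) - x (Suc (Suc k)) - lam)"
      by (simp only: prod.lessThan_Suc_shift) (simp add: y_def)
    also have "\<dots> = (\<Prod>k<Suc M. xt (Suc k) - (if Suc k = N then x 1 else x (Suc k + 1)) - lam)"
      by (simp only: prod.lessThan_Suc) (simp add: N mult.commute)
    also have "\<dots> = (\<Prod>k=1..N. xt k - (if k = N then x 1 else x (k + 1)) - lam)"
      by (simp add: N prod.atLeast1_atMost_eq)
    finally show ?thesis .
  qed
  have "y 0 = xt N" "y N = xt N"
    using N by (simp_all add: y_def)
  with chain have "Tmat x p lam N *v hvec (xt N) =
      ((2 * lam) ^ N * (\<Prod>k=1..N. y (k - 1) - x k - lam) / (\<Prod>k=1..N. xt k - x k - lam))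
        *s hvec (xt N)"
    by (simp add: prod.distrib prod_dividef)
  then show ?thesis
    unfolding is_eigenvalue_def numerator using hvec_nonzero by blast
qed

lemma Tmat_open_end_entry:
  assumes "N \<ge> 1"
    and H1: "xt 1 - x 1 - lam \<noteq> 0" "exp (2 * p 1) = (xt 1 - x 1 + lam) / (xt 1 - x 1 - lam)"
    and H: "\<forall>k\<in>{2..N}. xt k - x k - lam \<noteq> 0 \<and> x k - xt (k - 1) - lam \<noteq> 0 \<and>
        exp (2 * p k) =
          (xt k - x k + lam) / (xt k - x k - lam) *
          ((x k - xt (k - 1) + lam) / (x k - xt (k - 1) - lam))"
  shows "Tmat x p lam N $ 2 $ 1 =
           (2 * lam) ^ N *
            (\<Prod>k=1..N-1. xt k - x (k + 1) - lam) /
            (\<Prod>k=1..N. xt k - x k - lam)"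
proof -
  obtain M where N: "N = Suc M"
    using assms(1) by (cases N) auto
  define v where "v k = (if k = 0 then axis 1 1 else hvec (xt k))" for k
  define a where "a k = (if k = 1 then 1 else xt (k - 1) - x k - lam)" for k
  have chain: "Tmat x p lam N *v v 0 =
     (\<Prod>k=1..N. 2 * lam * a k / (xt k - x k - lam)) *s v N"
  proof (rule Tmat_mult_chain)
    fix k assume k: "k \<in> {1..N}"
    show "Lmat x p lam k *v v (k - 1) = (2 * lam * a k / (xt k - x k - lam)) *s v k"
    proof (cases "k = 1")
      case True
      then show ?thesis
        using H1 Lmat_mult_axis1[of "xt 1" x 1 lam p] by (simp add: v_def a_def)
    next
      case False
      then show ?thesis
        using H k Lmat_mult_hvec[of "xt k" x k lam "xt (k - 1)" p] by (simp add: v_def a_def)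
    qed
  qed
  have numerator: "(\<Prod>k=1..N. a k) = (\<Prod>k=1..N-1. xt k - x (k + 1) - lam)"
  proof -
    have "(\<Prod>k=1..N. a k) = a 1 * (\<Prod>k<M. a (Suc (Suc k)))"
      by (simp only: N One_nat_def prod.atLeast1_atMost_eq prod.lessThan_Suc_shift)
    also have "\<dots> = (\<Prod>k=1..N-1. xt k - x (k + 1) - lam)"
      by (simp add: N a_def prod.atLeast1_atMost_eq)
    finally show ?thesis .
  qed
  have "v 0 = axis 1 1" "v N = hvec (xt N)"
    using N by (simp_all add: v_def)
  have "Tmat x p lam N $ 2 $ 1 = (Tmat x p lam N *v v 0) $ 2"
    using \<open>v 0 = axis 1 1\<close> by (simp add: matrix_vector_mult_def axis_def sum_2)
  also have "\<dots> = (2 * lam) ^ N * (\<Prod>k=1..N. a k) / (\<Prod>k=1..N. xt k - x k - lam)"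
    using \<open>v N = hvec (xt N)\<close> by (simp add: chain hvec_def prod.distrib prod_dividef)
  finally show ?thesis
    unfolding numerator .
qed

theorem theorem15:
  fixes N :: nat and lam :: complex and x p xt :: "nat \<Rightarrow> complex"
  assumes "N \<ge> 2" and "lam \<noteq> 0"
  shows
   "((\<forall>k\<in>{1..N}. xt k - x k - lam \<noteq> 0 \<and>
        x k - (if k = 1 then xt N else xt (k - 1)) - lam \<noteq> 0 \<and>
        exp (2 * p k) =
          (xt k - x k + lam) / (xt k - x k - lam) *
          ((x k - (if k = 1 then xt N else xt (k - 1)) + lam) /
           (x k - (if k = 1 then xt N else xt (k - 1)) - lam)))
     \<longrightarrow> is_eigenvalue (Tmat x p lam N)
           ((2 * lam) ^ N *
            (\<Prod>k=1..N. xt k - (if k = N then x 1 else x (k + 1)) - lam) /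
            (\<Prod>k=1..N. xt k - x k - lam)))
    \<and>
    ((xt 1 - x 1 - lam \<noteq> 0 \<and>
      exp (2 * p 1) = (xt 1 - x 1 + lam) / (xt 1 - x 1 - lam) \<and>
      (\<forall>k\<in>{2..N}. xt k - x k - lam \<noteq> 0 \<and> x k - xt (k - 1) - lam \<noteq> 0 \<and>
        exp (2 * p k) =
          (xt k - x k + lam) / (xt k - x k - lam) *
          ((x k - xt (k - 1) + lam) / (x k - xt (k - 1) - lam))))
     \<longrightarrow> Tmat x p lam N $ 2 $ 1 =
           (2 * lam) ^ N *
            (\<Prod>k=1..N-1. xt k - x (k + 1) - lam) /
            (\<Prod>k=1..N. xt k - x k - lam))"
proof -
  \<comment> \<open>Both parts hold for every \<open>N \<ge> 1\<close>.\<close>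
  have "N \<ge> 1"
    using assms(1) by simp
  then show ?thesis
    using Tmat_periodic_eigenvalue Tmat_open_end_entry by blast
qed

end
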